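(* Let $p$ be a prime, $m\ge 1$ and $r$ integers with $r^p\equiv 1 \pmod m$, and let $G=\langle x, y\mid x^p=y^m=1,\ x^{-1}yx=y^r\rangle$ (so $G\cong C_p\ltimes C_m$, $|G|=pm$), where $p$ is the smallest prime divisor of $|G|$ and $\gcd(p(r-1), m)=1$. Let $N=\langle y\rangle$ and let $\varphi:G\to G/N$ be the canonical homomorphism. Let $T=g_1\cdot \ldots \cdot g_t$ be a sequence over $G$ such that $\varphi(T)=\varphi(g_1)\cdot\ldots\cdot\varphi(g_t)$ is a minimal product-one sequence over $G/N$. Then for any $u\in\pi(T)$ we have $\pi(T)\supseteq \{u^{r^{s_{1}}}, u^{r^{s_{2}}}, \ldots, u^{r^{s_{t}}}\}$ for some subset $\{s_1,\ldots, s_t\}\subseteq [0,p-1]$. Moreover, if $u\neq 1$, then $t\le p$ and $u^{r^{s_i}}\neq u^{r^{s_j}}$ for all $1\leq i<j\leq t$.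
   Context: A sequence over a group is a finite unordered list of elements with repetition allowed. For a sequence $S=g_1\cdot\ldots\cdot g_\ell$, $\pi(S)=\{g_{\tau(1)}\cdots g_{\tau(\ell)}:\tau \text{ a permutation of } [1,\ell]\}$. $S$ is product-one if $1\in\pi(S)$, and minimal product-one if it is product-one and has no proper nonempty product-one subsequence. For integers $a\le b$, $[a,b]=\{z\in\mathbb Z: a\le z\le b\}$. *)

theory Defs
  imports "HOL-Algebra.Algebra" "HOL-Library.Multiset" "HOL-Number_Theory.Cong"
begin

definition list_prod :: "('a, 'b) monoid_scheme \<Rightarrow> 'a list \<Rightarrow> 'a" where
  "list_prod G xs = foldr (\<lambda>a b. a \<otimes>\<^bsub>G\<^esub> b) xs \<one>\<^bsub>G\<^esub>"

definition seq_prods :: "('a, 'b) monoid_scheme \<Rightarrow> 'a multiset \<Rightarrow> 'a set" where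
  "seq_prods G S = {list_prod G xs | xs. mset xs = S}"

definition product_one :: "('a, 'b) monoid_scheme \<Rightarrow> 'a multiset \<Rightarrow> bool" where
  "product_one G S \<longleftrightarrow> \<one>\<^bsub>G\<^esub> \<in> seq_prods G S"

definition minimal_product_one :: "('a, 'b) monoid_scheme \<Rightarrow> 'a multiset \<Rightarrow> bool" where
  "minimal_product_one G S \<longleftrightarrow> product_one G S \<and>
     (\<forall>S'. S' \<subseteq># S \<and> S' \<noteq> {#} \<and> S' \<noteq> S \<longrightarrow> \<not> product_one G S')"

end

theory Submission
  imports Defs
begin

text \<open>
  The quotient G/N is cyclic, generated by
  the coset of x, hence abelian; so every ordered product u of T maps to the product of the
  product-one sequence phi(T), i.e. u lies in N.
  Rotating the ordering conjugates u by a prefix product P_k = g_1 ... g_k. Writing P_k = n x^c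
  with n in N and 0 <= c < p, and using that N is abelian and x^(-1) n x = n^r, this conjugate is
  u^(r^c). The cosets of P_0, ..., P_(t-1) are pairwise distinct, since otherwise a proper
  consecutive block of phi(T) would already be product-one; hence so are the exponents c.
  Finally r^b - r^a is coprime to m for 0 <= a < b < p, because gcd(p (r - 1), m) = 1 and
  r^p = 1 mod m, so the powers u^(r^c) are pairwise distinct when u is a nontrivial element of N.
\<close>

lemma (in group) inv_mult_cancel [simp]:
  "a \<in> carrier G \<Longrightarrow> b \<in> carrier G \<Longrightarrow> inv a \<otimes> (a \<otimes> b) = b"
  by (simp add: m_assoc[symmetric])

lemma (in group) mult_inv_cancel [simp]:
  "a \<in> carrier G \<Longrightarrow> b \<in> carrier G \<Longrightarrow> a \<otimes> (inv a \<otimes> b) = b"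
  by (simp add: m_assoc[symmetric])

lemma list_prod_Nil [simp]: "list_prod G [] = \<one>\<^bsub>G\<^esub>"
  by (simp add: list_prod_def)

lemma list_prod_Cons [simp]: "list_prod G (a # xs) = a \<otimes>\<^bsub>G\<^esub> list_prod G xs"
  by (simp add: list_prod_def)

lemma (in monoid) list_prod_closed [simp]:
  "set xs \<subseteq> carrier G \<Longrightarrow> list_prod G xs \<in> carrier G"
  by (induction xs) auto

lemma (in monoid) list_prod_append:
  "set xs \<subseteq> carrier G \<Longrightarrow> set ys \<subseteq> carrier G \<Longrightarrow>
   list_prod G (xs @ ys) = list_prod G xs \<otimes> list_prod G ys"
  by (induction xs) (auto simp: m_assoc)

lemma (in group_hom) list_prod_hom:
  "set xs \<subseteq> carrier G \<Longrightarrow> h (list_prod G xs) = list_prod H (map h xs)"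
  by (induction xs) auto

lemma (in comm_monoid) list_prod_mset_cong:
  "mset xs = mset ys \<Longrightarrow> set xs \<subseteq> carrier G \<Longrightarrow> list_prod G xs = list_prod G ys"
  unfolding list_prod_def by (rule multlist_perm_cong)

lemma (in comm_monoid) seq_prods_product_one:
  assumes "product_one G S" "set_mset S \<subseteq> carrier G"
  shows "seq_prods G S = {\<one>}"
proof -
  obtain zs where zs: "mset zs = S" "list_prod G zs = \<one>"
    using assms(1) unfolding product_one_def seq_prods_def by auto
  have "list_prod G xs = \<one>" if "mset xs = S" for xs
    using list_prod_mset_cong[of xs zs] that zs assms(2) by (metis set_mset_mset)
  then have "seq_prods G S \<subseteq> {\<one>}"
    unfolding seq_prods_def by blast
  then show ?thesis
    using assms(1) unfolding product_one_def by blast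
qed

lemma (in group) list_prod_rotate:
  fixes k :: nat
  assumes "set xs \<subseteq> carrier G"
  defines "P \<equiv> list_prod G (take k xs)"
  shows "list_prod G (drop k xs @ take k xs) = inv P \<otimes> list_prod G xs \<otimes> P"
proof -
  have take: "set (take k xs) \<subseteq> carrier G" and drop: "set (drop k xs) \<subseteq> carrier G"
    using subset_trans[OF set_take_subset assms(1)] subset_trans[OF set_drop_subset assms(1)] .
  define D where "D = list_prod G (drop k xs)"
  have P: "P \<in> carrier G" and D: "D \<in> carrier G"
    unfolding P_def D_def using list_prod_closed[OF take] list_prod_closed[OF drop] .
  have "list_prod G (drop k xs @ take k xs) = D \<otimes> P"
    unfolding P_def D_def using list_prod_append[OF drop take] .
  also have "\<dots> = inv P \<otimes> (P \<otimes> D) \<otimes> P"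
    using P D by (metis l_inv l_one m_assoc inv_closed)
  finally show ?thesis
    unfolding P_def D_def using list_prod_append[OF take drop] by simp
qed

lemma (in group) conj_prefix_prod_in_seq_prods:
  fixes k :: nat
  assumes "set xs \<subseteq> carrier G"
  defines "P \<equiv> list_prod G (take k xs)"
  shows "inv P \<otimes> list_prod G xs \<otimes> P \<in> seq_prods G (mset xs)"
proof -
  have "mset (drop k xs @ take k xs) = mset xs"
    by (metis append_take_drop_id mset_append add.commute)
  then have "list_prod G (drop k xs @ take k xs) \<in> seq_prods G (mset xs)"
    unfolding seq_prods_def by blast
  moreover have "inv P \<otimes> list_prod G xs \<otimes> P = list_prod G (drop k xs @ take k xs)"
    unfolding P_def by (rule list_prod_rotate[OF assms(1), symmetric])
  ultimately show ?thesis
    by simp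
qed

lemma (in group) minimal_product_one_prefix_prods_inj:
  assumes "minimal_product_one G (mset zs)" "set zs \<subseteq> carrier G"
  shows "inj_on (\<lambda>k. list_prod G (take k zs)) {..<length zs}"
proof (rule linorder_inj_onI')
  fix i j assume "i \<in> {..<length zs}" "j \<in> {..<length zs}" "i < j"
  then have ij: "i < j" "j < length zs" by auto
  define L where "L = take (j - i) (drop i zs)"
  have take_j: "take j zs = take i zs @ L"
    unfolding L_def using take_add[of i "j - i" zs] ij by simp
  have zs_split: "zs = take i zs @ L @ drop j zs"
    using take_j by (metis append_take_drop_id append.assoc)
  have carrier: "set (take i zs) \<subseteq> carrier G" "set L \<subseteq> carrier G"
    unfolding L_def using assms(2) set_take_subset set_drop_subset by (meson order_trans)+
  show "list_prod G (take i zs) \<noteq> list_prod G (take j zs)"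
  proof
    assume "list_prod G (take i zs) = list_prod G (take j zs)"
    then have "list_prod G L = \<one>"
      using list_prod_append[OF carrier] carrier unfolding take_j by simp
    then have "product_one G (mset L)"
      unfolding product_one_def seq_prods_def by (metis (mono_tags) mem_Collect_eq)
    moreover have "mset L \<subseteq># mset zs"
      by (subst zs_split) simp
    moreover have "length L = j - i"
      unfolding L_def using ij by simp
    then have "mset L \<noteq> {#}" "mset L \<noteq> mset zs"
      using ij by (auto dest: arg_cong[of _ _ size])
    ultimately show False
      using assms(1) unfolding minimal_product_one_def by blast
  qed
qed

lemma cong_one_of_coprime_exponents:
  fixes r n :: int and a b :: nat
  assumes "[r ^ a = 1] (mod n)" "[r ^ b = 1] (mod n)" "coprime a b" "0 < a"
  shows "[r = 1] (mod n)"
proof -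
  obtain s t where st: "a * s = b * t + 1"
    using bezout_nat[of a b] assms(3,4) by auto
  have "[r ^ (a * s) = 1] (mod n)"
    using cong_pow[OF assms(1), of s] by (simp add: power_mult)
  moreover have "[r ^ (a * s) = r] (mod n)"
    using cong_mult[OF cong_pow[OF assms(2), of t] cong_refl[of r]]
    by (simp add: st power_add power_mult mult.commute)
  ultimately show ?thesis
    by (metis cong_sym cong_trans)
qed

lemma coprime_power_minus_one:
  fixes r m :: int
  assumes "Factorial_Ring.prime p" "[r ^ p = 1] (mod m)" "coprime (int p * (r - 1)) m"
    and "0 < d" "d < p"
  shows "coprime (r ^ d - 1) m"
proof -
  define g where "g = gcd (r ^ d - 1) m"
  have "[r ^ d = 1] (mod g)"
    unfolding g_def cong_iff_dvd_diff by simp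
  moreover have "[r ^ p = 1] (mod g)"
    using cong_dvd_modulus[OF assms(2)] unfolding g_def by simp
  moreover have "\<not> p dvd d"
    using assms(4,5) by (auto dest: dvd_imp_le)
  then have "coprime d p"
    using prime_imp_coprime[OF assms(1)] by (simp add: coprime_commute)
  ultimately have "[r = 1] (mod g)"
    using cong_one_of_coprime_exponents assms(4) by blast
  then have "g dvd int p * (r - 1)" and "g dvd m"
    unfolding g_def by (simp_all add: cong_iff_dvd_diff)
  then have "is_unit g"
    using assms(3) coprime_common_divisor by blast
  then show ?thesis
    unfolding g_def by (simp add: coprime_iff_gcd_eq_1)
qed

lemma coprime_power_diff:
  fixes r m :: int
  assumes "Factorial_Ring.prime p" "[r ^ p = 1] (mod m)" "coprime (int p * (r - 1)) m"
    and "a < b" "b < p"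
  shows "coprime (r ^ b - r ^ a) m"
proof -
  have "coprime (r ^ p) m"
    using cong_imp_coprime[OF cong_sym[OF assms(2)]] by simp
  then have "coprime (r ^ a) m"
    using prime_gt_0_nat[OF assms(1)] by simp
  moreover have "r ^ b - r ^ a = r ^ a * (r ^ (b - a) - 1)"
    using assms(4) by (simp add: algebra_simps flip: power_add)
  ultimately show ?thesis
    using coprime_power_minus_one[OF assms(1-3), of "b - a"] assms(4,5) by simp
qed

lemma (in group) eq_one_of_pow_eq_pow_coprime:
  assumes "g \<in> carrier G" "g [^] (m::int) = \<one>" "g [^] (a::int) = g [^] b" "coprime (b - a) m"
  shows "g = \<one>"
proof -
  have "int (ord g) dvd m" "int (ord g) dvd b - a"
    using assms int_pow_eq_id int_pow_eq by auto
  then have "ord g = 1"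
    using assms(4) coprime_common_divisor by fastforce
  then show ?thesis
    using pow_ord_eq_1[OF assms(1)] assms(1) by simp
qed

locale split_metacyclic = group G for G (structure) +
  fixes x y :: 'a and p m :: nat and r :: int
  assumes prime_p: "Factorial_Ring.prime p"
    and r_pow_p: "[r ^ p = 1] (mod int m)"
    and coprime_p_r_minus_one: "coprime (int p * (r - 1)) (int m)"
    and x_carrier: "x \<in> carrier G" and y_carrier: "y \<in> carrier G"
    and generate_x_y: "generate G {x, y} = carrier G"
    and x_pow_p: "x [^] p = \<one>" and y_pow_m: "y [^] m = \<one>"
    and conj_y: "inv x \<otimes> y \<otimes> x = y [^] r"
begin

definition N :: "'a set" where "N = generate G {y}"

lemma N_eq: "N = {y [^] (k::int) | k. k \<in> UNIV}"
  unfolding N_def using generate_pow[OF y_carrier] .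

lemma subgroup_N: "subgroup N G"
  unfolding N_def using y_carrier by (simp add: generate_is_subgroup)

lemma N_carrier: "n \<in> N \<Longrightarrow> n \<in> carrier G"
  using subgroup.mem_carrier[OF subgroup_N] .

lemma N_m_comm: "a \<in> N \<Longrightarrow> b \<in> N \<Longrightarrow> a \<otimes> b = b \<otimes> a"
  unfolding N_eq using y_carrier by (auto simp flip: int_pow_mult simp: add.commute)

lemma N_pow_m:
  assumes "n \<in> N"
  shows "n [^] int m = \<one>"
proof -
  obtain k where "n = y [^] (k::int)"
    using assms unfolding N_eq by auto
  then have "n [^] int m = (y [^] int m) [^] k"
    using y_carrier by (simp add: int_pow_pow mult.commute)
  then show ?thesis
    using y_pow_m by (simp add: int_pow_int)
qed

lemma conj_x_N:
  assumes "n \<in> N"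
  shows "inv x \<otimes> n \<otimes> x = n [^] r"
proof -
  obtain k where n: "n = y [^] (k::int)"
    using assms unfolding N_eq by auto
  have "(\<lambda>g. inv x \<otimes> g \<otimes> x) \<in> hom G G"
    unfolding hom_def using x_carrier by (auto simp: m_assoc)
  from hom_int_pow[OF this y_carrier is_group is_group]
  have "inv x \<otimes> y [^] k \<otimes> x = (inv x \<otimes> y \<otimes> x) [^] k"
    by simp
  then show ?thesis
    unfolding n conj_y using y_carrier by (simp add: int_pow_pow mult.commute)
qed

lemma conj_x_pow_N:
  assumes "n \<in> N"
  shows "inv (x [^] (a::nat)) \<otimes> n \<otimes> x [^] a = n [^] (r ^ a)"
proof (induction a)
  case 0
  show ?case
    using N_carrier[OF assms] by simp
next
  case (Suc a)
  have "inv (x [^] Suc a) \<otimes> n \<otimes> x [^] Suc a = inv x \<otimes> (inv (x [^] a) \<otimes> n \<otimes> x [^] a) \<otimes> x"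
    using x_carrier N_carrier[OF assms] by (simp add: inv_mult_group m_assoc)
  also have "\<dots> = (n [^] (r ^ a)) [^] r"
    using Suc conj_x_N subgroup_int_pow_closed[OF subgroup_N assms] by simp
  finally show ?case
    using N_carrier[OF assms] by (simp add: int_pow_pow mult.commute)
qed

lemma inv_x_pow: "inv (x [^] (a::nat)) = x [^] ((p - 1) * a)"
proof -
  have "x [^] ((p - 1) * a) \<otimes> x [^] a = (x [^] p) [^] a"
    using x_carrier prime_gt_0_nat[OF prime_p]
    by (simp add: nat_pow_mult nat_pow_pow algebra_simps)
  then show ?thesis
    using x_carrier x_pow_p by (simp add: inv_equality)
qed

lemma x_pow_conj_in_N: "n \<in> N \<Longrightarrow> x [^] (a::nat) \<otimes> n \<otimes> inv (x [^] a) \<in> N"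
  using conj_x_pow_N[of n "(p - 1) * a"] subgroup_int_pow_closed[OF subgroup_N]
  by (metis inv_x_pow inv_inv nat_pow_closed x_carrier)

lemma subgroup_N_x_pows: "subgroup {n \<otimes> x [^] (a::nat) | n a. n \<in> N} G" (is "subgroup ?S G")
proof
  have mem: "n \<otimes> x [^] a \<in> ?S" if "n \<in> N" for n and a :: nat
    using that by blast
  show "?S \<subseteq> carrier G"
    using N_carrier x_carrier by auto
  show "\<one> \<in> ?S"
    using mem[OF subgroup.one_closed[OF subgroup_N], of 0] x_carrier by simp
  fix g h assume "g \<in> ?S" "h \<in> ?S"
  then obtain n a n' b where g: "n \<in> N" "g = n \<otimes> x [^] (a::nat)"
    and h: "n' \<in> N" "h = n' \<otimes> x [^] (b::nat)" by auto
  have "n \<otimes> (x [^] a \<otimes> n' \<otimes> inv (x [^] a)) \<in> N"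
    using x_pow_conj_in_N[OF h(1)] g(1) subgroup.m_closed[OF subgroup_N] by blast
  moreover have "g \<otimes> h = n \<otimes> (x [^] a \<otimes> n' \<otimes> inv (x [^] a)) \<otimes> x [^] (a + b)"
    using g h N_carrier x_carrier by (simp add: m_assoc nat_pow_mult[symmetric])
  ultimately show "g \<otimes> h \<in> ?S"
    using mem by simp
  have "inv (x [^] a) \<otimes> inv n \<otimes> x [^] a \<in> N"
    using conj_x_pow_N subgroup_int_pow_closed[OF subgroup_N]
      subgroup.m_inv_closed[OF subgroup_N g(1)] by simp
  moreover have "inv g = (inv (x [^] a) \<otimes> inv n \<otimes> x [^] a) \<otimes> inv (x [^] a)"
    using g N_carrier x_carrier by (simp add: m_assoc inv_mult_group)
  ultimately show "inv g \<in> ?S"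
    using mem by (simp add: inv_x_pow)
qed

lemma carrier_decompose:
  assumes "g \<in> carrier G"
  obtains n a where "n \<in> N" "a < p" "g = n \<otimes> x [^] a"
proof -
  let ?S = "{n \<otimes> x [^] (a::nat) | n a. n \<in> N}"
  have "\<one> \<otimes> x [^] (1::nat) \<in> ?S"
    using subgroup.one_closed[OF subgroup_N] by blast
  moreover have "y \<otimes> x [^] (0::nat) \<in> ?S"
    unfolding N_def by (blast intro: generate.incl)
  ultimately have "{x, y} \<subseteq> ?S"
    using x_carrier y_carrier by simp
  then have "generate G {x, y} \<subseteq> ?S"
    by (rule generate_subgroup_incl[OF _ subgroup_N_x_pows])
  then have "g \<in> ?S"
    by (rule subsetD) (simp add: assms generate_x_y)
  then obtain n a where n: "n \<in> N" "g = n \<otimes> x [^] (a::nat)"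
    by auto
  have "x [^] a = (x [^] p) [^] (a div p) \<otimes> x [^] (a mod p)"
    using x_carrier by (simp add: nat_pow_pow nat_pow_mult)
  then have "g = n \<otimes> x [^] (a mod p)"
    using n(2) x_carrier x_pow_p by simp
  then show ?thesis
    using that[OF n(1)] prime_gt_0_nat[OF prime_p] mod_less_divisor by blast
qed

lemma normal_N: "N \<lhd> G"
  unfolding normal_inv_iff
proof (intro conjI ballI)
  fix g h assume g: "g \<in> carrier G" and h: "h \<in> N"
  obtain n a where n: "n \<in> N" "a < p" "g = n \<otimes> x [^] a"
    using carrier_decompose[OF g] .
  have "n \<otimes> (x [^] a \<otimes> h \<otimes> inv (x [^] a)) \<otimes> inv n \<in> N"
    using subgroup.m_closed[OF subgroup_N, OF subgroup.m_closed[OF subgroup_N n(1) x_pow_conj_in_N[OF h]]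
        subgroup.m_inv_closed[OF subgroup_N n(1)]] .
  moreover have "g \<otimes> h \<otimes> inv g = n \<otimes> (x [^] a \<otimes> h \<otimes> inv (x [^] a)) \<otimes> inv n"
    using n h N_carrier x_carrier by (simp add: m_assoc inv_mult_group)
  ultimately show "g \<otimes> h \<otimes> inv g \<in> N"
    by simp
qed (rule subgroup_N)

lemma rcos_eq_x_pow:
  assumes "g \<in> carrier G"
  obtains a where "a < p" "N #> g = N #> x [^] a"
proof -
  obtain n a where n: "n \<in> N" "a < p" "g = n \<otimes> x [^] a"
    using carrier_decompose[OF assms] .
  have "N #> g = (N #> n) #> x [^] a"
    using n N_carrier x_carrier subgroup.subset[OF subgroup_N] by (simp add: coset_mult_assoc)
  then have "N #> g = N #> x [^] a"
    unfolding subgroup.rcos_const[OF subgroup_N is_group n(1)] .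
  then show ?thesis
    by (rule that[OF n(2)])
qed

lemma conj_N_by_rcos:
  assumes "g \<in> carrier G" "N #> g = N #> x [^] a" "u \<in> N"
  shows "inv g \<otimes> u \<otimes> g = u [^] (r ^ a)"
proof -
  have "g \<in> N #> x [^] a"
    using rcos_self[OF assms(1) subgroup_N] assms(2) by simp
  then obtain n where n: "n \<in> N" "g = n \<otimes> x [^] a"
    unfolding r_coset_def by blast
  have "inv n \<otimes> u \<otimes> n = u"
    using N_m_comm[OF assms(3) n(1)] N_carrier assms(3) n(1) by (simp add: m_assoc)
  moreover have "inv g \<otimes> u \<otimes> g = inv (x [^] a) \<otimes> (inv n \<otimes> u \<otimes> n) \<otimes> x [^] a"
    using n N_carrier assms(3) x_carrier by (simp add: m_assoc inv_mult_group)
  ultimately show ?thesis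
    using conj_x_pow_N[OF assms(3)] by simp
qed

lemma group_hom_rcos_N: "group_hom G (G Mod N) (\<lambda>g. N #> g)"
  using normal.factorgroup_is_group[OF normal_N] normal.r_coset_hom_Mod[OF normal_N]
  by (simp add: group_hom_def group_hom_axioms_def)

lemma comm_group_Mod_N: "comm_group (G Mod N)"
proof (rule group.group_comm_groupI)
  show "group (G Mod N)"
    using normal.factorgroup_is_group[OF normal_N] .
  have cosets_commute: "(N #> g) <#> (N #> h) = (N #> h) <#> (N #> g)"
    if g: "g \<in> carrier G" and h: "h \<in> carrier G" for g h
  proof -
    obtain a where "a < p" and a: "N #> g = N #> x [^] a"
      using rcos_eq_x_pow[OF g] .
    obtain b where "b < p" and b: "N #> h = N #> x [^] b"
      using rcos_eq_x_pow[OF h] .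
    show ?thesis
      using normal.rcos_sum[OF normal_N] g h x_carrier a b
      by (simp add: nat_pow_mult add.commute)
  qed
  fix A B assume "A \<in> carrier (G Mod N)" "B \<in> carrier (G Mod N)"
  then show "A \<otimes>\<^bsub>G Mod N\<^esub> B = B \<otimes>\<^bsub>G Mod N\<^esub> A"
    using cosets_commute by (auto simp: carrier_FactGroup)
qed

lemma seq_prods_subset_N:
  assumes "set_mset S \<subseteq> carrier G" "product_one (G Mod N) (image_mset (\<lambda>g. N #> g) S)"
  shows "seq_prods G S \<subseteq> N"
proof
  interpret Q: comm_group "G Mod N"
    by (rule comm_group_Mod_N)
  interpret \<phi>: group_hom G "G Mod N" "\<lambda>g. N #> g"
    by (rule group_hom_rcos_N)
  fix u assume "u \<in> seq_prods G S"
  then obtain xs where xs: "mset xs = S" "u = list_prod G xs"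
    unfolding seq_prods_def by auto
  have carrier: "set xs \<subseteq> carrier G"
    using assms(1) xs(1) by auto
  have "N #> u \<in> seq_prods (G Mod N) (image_mset (\<lambda>g. N #> g) S)"
    unfolding xs(2) \<phi>.list_prod_hom[OF carrier] seq_prods_def xs(1)[symmetric] mset_map[symmetric]
    by blast
  moreover have "seq_prods (G Mod N) (image_mset (\<lambda>g. N #> g) S) = {\<one>\<^bsub>G Mod N\<^esub>}"
    using assms \<phi>.hom_closed by (intro Q.seq_prods_product_one) auto
  ultimately have "N #> u = N"
    by simp
  then show "u \<in> N"
    using rcos_self[OF list_prod_closed[OF carrier] subgroup_N] xs(2) by simp
qed

lemma inj_on_pow_r_pow:
  assumes "u \<in> N" "u \<noteq> \<one>"
  shows "inj_on (\<lambda>a. u [^] (r ^ a)) {..<p}"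
proof (rule linorder_inj_onI')
  fix a b assume "a \<in> {..<p}" "b \<in> {..<p}" "a < b"
  then have "coprime (r ^ b - r ^ a) (int m)"
    using coprime_power_diff[OF prime_p r_pow_p coprime_p_r_minus_one] by simp
  then show "u [^] (r ^ a) \<noteq> u [^] (r ^ b)"
    using eq_one_of_pow_eq_pow_coprime[OF N_carrier[OF assms(1)] N_pow_m[OF assms(1)]] assms(2)
    by blast
qed

lemma rcos_prefix_prods_inj:
  assumes "set xs \<subseteq> carrier G" "minimal_product_one (G Mod N) (mset (map (\<lambda>g. N #> g) xs))"
  shows "inj_on (\<lambda>k. N #> list_prod G (take k xs)) {..<length xs}"
proof -
  interpret Q: group "G Mod N"
    using normal.factorgroup_is_group[OF normal_N] .
  interpret \<phi>: group_hom G "G Mod N" "\<lambda>g. N #> g"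
    by (rule group_hom_rcos_N)
  have "set (map (\<lambda>g. N #> g) xs) \<subseteq> carrier (G Mod N)"
    using assms(1) \<phi>.hom_closed by auto
  then have "inj_on (\<lambda>k. list_prod (G Mod N) (take k (map (\<lambda>g. N #> g) xs))) {..<length xs}"
    using Q.minimal_product_one_prefix_prods_inj[OF assms(2)] by simp
  moreover have "list_prod (G Mod N) (take k (map (\<lambda>g. N #> g) xs)) = N #> list_prod G (take k xs)"
    for k
    unfolding take_map using \<phi>.list_prod_hom[OF subset_trans[OF set_take_subset assms(1)]] by simp
  ultimately show ?thesis
    by simp
qed

lemma rotation_exponents:
  assumes "set xs \<subseteq> carrier G" "minimal_product_one (G Mod N) (mset (map (\<lambda>g. N #> g) xs))"
  obtains c where "\<forall>k < length xs. c k < p" "inj_on c {..<length xs}"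
    and "\<forall>k < length xs. list_prod G xs [^] (r ^ c k) \<in> seq_prods G (mset xs)"
proof -
  let ?P = "\<lambda>k. list_prod G (take k xs)"
  have take: "set (take k xs) \<subseteq> carrier G" for k
    using subset_trans[OF set_take_subset assms(1)] .
  have "\<forall>k. \<exists>a. a < p \<and> N #> ?P k = N #> x [^] a"
    using rcos_eq_x_pow[OF list_prod_closed[OF take]] by blast
  then obtain c where c: "\<And>k. c k < p" "\<And>k. N #> ?P k = N #> x [^] c k"
    using choice[of "\<lambda>k a. a < p \<and> N #> ?P k = N #> x [^] a"] by blast
  have "list_prod G xs \<in> seq_prods G (mset xs)"
    unfolding seq_prods_def by blast
  then have u_N: "list_prod G xs \<in> N"
    using seq_prods_subset_N[of "mset xs"] assms unfolding minimal_product_one_def by auto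
  have "inj_on c {..<length xs}"
  proof (rule inj_on_imageI2)
    show "inj_on ((\<lambda>a. N #> x [^] a) \<circ> c) {..<length xs}"
      using rcos_prefix_prods_inj[OF assms] unfolding comp_def c(2) .
  qed
  moreover have "list_prod G xs [^] (r ^ c k) \<in> seq_prods G (mset xs)" for k
    using conj_prefix_prod_in_seq_prods[OF assms(1), of k]
    unfolding conj_N_by_rcos[OF list_prod_closed[OF take] c(2) u_N] .
  ultimately show ?thesis
    using that[of c] c(1) by blast
qed

lemma rotation_exponents_seq_prods:
  assumes "set T \<subseteq> carrier G" "minimal_product_one (G Mod N) (mset (map (\<lambda>g. N #> g) T))"
    and "u \<in> seq_prods G (mset T)"
  obtains s where "s ` {1..length T} \<subseteq> {..<p}" "inj_on s {1..length T}"
    and "\<forall>i \<in> {1..length T}. u [^] (r ^ s i) \<in> seq_prods G (mset T)"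
proof -
  obtain xs where xs: "mset xs = mset T" "u = list_prod G xs"
    using assms(3) unfolding seq_prods_def by auto
  have carrier: "set xs \<subseteq> carrier G"
    using assms(1) mset_eq_setD[OF xs(1)] by simp
  have "minimal_product_one (G Mod N) (mset (map (\<lambda>g. N #> g) xs))"
    using assms(2) xs(1) by simp
  then obtain c where c: "\<forall>k < length T. c k < p" "inj_on c {..<length T}"
    and rot: "\<forall>k < length T. u [^] (r ^ c k) \<in> seq_prods G (mset T)"
    using rotation_exponents[OF carrier] xs mset_eq_length[OF xs(1)] by auto
  define s where "s i = c (i - 1)" for i
  have "s ` {1..length T} \<subseteq> {..<p}"
    using c(1) unfolding s_def by auto
  moreover have "inj_on s {1..length T}"
  proof (rule inj_onI)
    fix i j assume i: "i \<in> {1..length T}" and j: "j \<in> {1..length T}" and "s i = s j"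
    moreover have "i - 1 \<in> {..<length T}" "j - 1 \<in> {..<length T}"
      using i j by auto
    ultimately have "i - 1 = j - 1"
      using inj_onD[OF c(2)] unfolding s_def by blast
    then show "i = j"
      using i j by auto
  qed
  moreover have "\<forall>i \<in> {1..length T}. u [^] (r ^ s i) \<in> seq_prods G (mset T)"
    using rot unfolding s_def by auto
  ultimately show ?thesis
    using that by blast
qed

lemma seq_prods_contains_r_powers:
  assumes "set T \<subseteq> carrier G" "minimal_product_one (G Mod N) (mset (map (\<lambda>g. N #> g) T))"
    and "u \<in> seq_prods G (mset T)"
  shows "\<exists>s :: nat \<Rightarrow> nat.
           (\<forall>i \<in> {1..length T}. s i \<in> {0..p - 1}) \<and> inj_on s {1..length T} \<and>
           (\<forall>i \<in> {1..length T}. u [^] (r ^ s i) \<in> seq_prods G (mset T)) \<and>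
           (u \<noteq> \<one> \<longrightarrow> length T \<le> p \<and>
              (\<forall>i j. 1 \<le> i \<and> i < j \<and> j \<le> length T \<longrightarrow> u [^] (r ^ s i) \<noteq> u [^] (r ^ s j)))"
proof -
  obtain s where s: "s ` {1..length T} \<subseteq> {..<p}" "inj_on s {1..length T}"
    and rot: "\<forall>i \<in> {1..length T}. u [^] (r ^ s i) \<in> seq_prods G (mset T)"
    using rotation_exponents_seq_prods[OF assms] .
  have u_N: "u \<in> N"
    using seq_prods_subset_N[of "mset T"] assms unfolding minimal_product_one_def by auto
  have "s i \<in> {0..p - 1}" if "i \<in> {1..length T}" for i
    using s(1) that by fastforce
  moreover have "length T \<le> p"
    using card_inj_on_le[OF s(2,1)] by simp
  moreover have "u [^] (r ^ s i) \<noteq> u [^] (r ^ s j)"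
    if "u \<noteq> \<one>" "1 \<le> i \<and> i < j \<and> j \<le> length T" for i j
  proof -
    have "inj_on (\<lambda>i. u [^] (r ^ s i)) {1..length T}"
      using comp_inj_on[OF s(2) inj_on_subset[OF inj_on_pow_r_pow[OF u_N that(1)] s(1)]]
      by (simp add: comp_def)
    then show ?thesis
      using that(2) by (auto dest: inj_onD)
  qed
  ultimately show ?thesis
    using s(2) rot by blast
qed

end

theorem lemma3p2:
  fixes G (structure) and x y :: 'a and p m :: nat and r :: int and T :: "'a list"
  assumes "group G" and "Factorial_Ring.prime p" and "m \<ge> 1"
    and "[r ^ p = 1] (mod int m)"
    and "x \<in> carrier G" and "y \<in> carrier G"
    and "generate G {x, y} = carrier G"
    and "x [^] p = \<one>" and "y [^] m = \<one>"
    and "inv x \<otimes> y \<otimes> x = y [^] r"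
    and "order G = p * m"
    and "\<forall>q::nat. Factorial_Ring.prime q \<and> q dvd p * m \<longrightarrow> p \<le> q"
    and "gcd (int p * (r - 1)) (int m) = 1"
    and "set T \<subseteq> carrier G"
    and "minimal_product_one (G Mod (generate G {y}))
           (mset (map (\<lambda>g. generate G {y} #> g) T))"
  shows "\<forall>u \<in> seq_prods G (mset T). \<exists>s :: nat \<Rightarrow> nat.
           (\<forall>i \<in> {1..length T}. s i \<in> {0..p - 1}) \<and> inj_on s {1..length T} \<and>
           (\<forall>i \<in> {1..length T}. u [^] (r ^ s i) \<in> seq_prods G (mset T)) \<and>
           (u \<noteq> \<one> \<longrightarrow> length T \<le> p \<and>
              (\<forall>i j. 1 \<le> i \<and> i < j \<and> j \<le> length T \<longrightarrow> u [^] (r ^ s i) \<noteq> u [^] (r ^ s j)))"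
proof -
  interpret split_metacyclic G x y p m r
    using assms
    by (intro split_metacyclic.intro split_metacyclic_axioms.intro) (simp_all add: coprime_iff_gcd_eq_1)
  show ?thesis
    using seq_prods_contains_r_powers[OF assms(14)] assms(15) unfolding N_def by blast
qed

end
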